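(* Let $\varphi:\mathcal{P}(\mathbf{N})\to[0,\infty]$ be a lower semicontinuous submeasure, and set $\|A\|_\varphi=\lim_{n}\varphi(A\setminus[1,n])$ for $A\subseteq\mathbf{N}$. Suppose $\|\mathbf{N}\|_\varphi=1$ and that $\mathcal{I}=\mathrm{Exh}(\varphi):=\{A\subseteq\mathbf{N}:\|A\|_\varphi=0\}$ is an analytic P-ideal. Then there exists a normalized capacity $\rho:\mathscr{B}(\mathrm{Ult}(\mathcal{I}))\to\mathbf{R}$ such that for every $A\subseteq\mathbf{N}$, $$\|A\|_\varphi=\int_{\mathrm{Ult}(\mathcal{I})}\mu_{\mathcal{F}}(A)\,\mathrm{d}\rho(\mathcal{F}).$$
   Context: A submeasure is $\varphi:\mathcal{P}(\mathbf{N})\to[0,\infty]$ with $\varphi(\emptyset)=0$, monotone and subadditive ($\varphi(A\cup B)\le\varphi(A)+\varphi(B)$); it is lower semicontinuous if $\varphi(A)=\lim_n\varphi(A\cap[1,n])$ for all $A$. An ideal on $\mathbf{N}$ is a family closed under subsets and finite unions, not containing $\mathbf{N}$, and containing all finite sets; it is a P-ideal if for every sequence $(A_n)$ in $\mathcal{I}$ there is $A\in\mathcal{I}$ with $A_n\setminus A$ finite for all $n$; analytic means analytic as a subset of the Cantor space $\{0,1\}^{\mathbf{N}}$. $\mathrm{Ult}(\mathcal{I})$ is the set of ultrafilters on $\mathbf{N}$ containing the dual filter $\{A:\mathbf{N}\setminus A\in\mathcal{I}\}$, with topology induced from $\beta\mathbf{N}$ (basic clopen sets $\{\mathcal{F}:A\in\mathcal{F}\}$);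 $\mathscr{B}$ denotes the Borel $\sigma$-algebra; $\mu_{\mathcal{F}}(A)=1$ if $A\in\mathcal{F}$, else $0$. A normalized capacity is a monotone set function with value $0$ at $\emptyset$ and $1$ at the whole space; the integral is the Choquet integral $\int_0^\infty\rho(f\ge t)\,\mathrm{d}t+\int_{-\infty}^0[\rho(f\ge t)-1]\,\mathrm{d}t$. *)

theory Defs
  imports "HOL-Analysis.Analysis"
begin

text \<open>The natural numbers N are modelled by the type nat; initial segments [1,n]
  are modelled by {..<n} (same limits).\<close>

definition submeasure :: "(nat set \<Rightarrow> ennreal) \<Rightarrow> bool" where
  "submeasure \<phi> \<longleftrightarrow> \<phi> {} = 0 \<and> (\<forall>A B. A \<subseteq> B \<longrightarrow> \<phi> A \<le> \<phi> B)
     \<and> (\<forall>A B. \<phi> (A \<union> B) \<le> \<phi> A + \<phi> B)"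

definition lsc_submeasure :: "(nat set \<Rightarrow> ennreal) \<Rightarrow> bool" where
  "lsc_submeasure \<phi> \<longleftrightarrow> submeasure \<phi> \<and>
     (\<forall>A. (\<lambda>n. \<phi> (A \<inter> {..<n})) \<longlonglongrightarrow> \<phi> A)"

definition exh_norm :: "(nat set \<Rightarrow> ennreal) \<Rightarrow> nat set \<Rightarrow> ennreal" where
  "exh_norm \<phi> A = lim (\<lambda>n. \<phi> (A - {..<n}))"

definition Exh :: "(nat set \<Rightarrow> ennreal) \<Rightarrow> nat set set" where
  "Exh \<phi> = {A. exh_norm \<phi> A = 0}"

definition is_ideal :: "nat set set \<Rightarrow> bool" where
  "is_ideal \<I> \<longleftrightarrow> (\<forall>A B. A \<in> \<I> \<longrightarrow> B \<subseteq> A \<longrightarrow> B \<in> \<I>)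
     \<and> (\<forall>A B. A \<in> \<I> \<longrightarrow> B \<in> \<I> \<longrightarrow> A \<union> B \<in> \<I>)
     \<and> UNIV \<notin> \<I> \<and> (\<forall>A. finite A \<longrightarrow> A \<in> \<I>)"

definition is_P_ideal :: "nat set set \<Rightarrow> bool" where
  "is_P_ideal \<I> \<longleftrightarrow> is_ideal \<I> \<and>
     (\<forall>An :: nat \<Rightarrow> nat set. (\<forall>n. An n \<in> \<I>) \<longrightarrow>
        (\<exists>A\<in>\<I>. \<forall>n. finite (An n - A)))"

text \<open>Analytic subsets of the Cantor space nat => bool (product topology):
  empty, or a continuous image of the Baire space nat => nat.\<close>
definition analytic :: "(nat \<Rightarrow> bool) set \<Rightarrow> bool" where
  "analytic S \<longleftrightarrow> S = {} \<or>
     (\<exists>f :: (nat \<Rightarrow> nat) \<Rightarrow> (nat \<Rightarrow> bool). continuous_on UNIV f \<and> range f = S)"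

definition analytic_family :: "nat set set \<Rightarrow> bool" where
  "analytic_family \<I> \<longleftrightarrow> analytic ((\<lambda>A n. n \<in> A) ` \<I>)"

definition ultrafilter_on_nat :: "nat set set \<Rightarrow> bool" where
  "ultrafilter_on_nat F \<longleftrightarrow> UNIV \<in> F \<and> {} \<notin> F
     \<and> (\<forall>A B. A \<in> F \<longrightarrow> A \<subseteq> B \<longrightarrow> B \<in> F)
     \<and> (\<forall>A B. A \<in> F \<longrightarrow> B \<in> F \<longrightarrow> A \<inter> B \<in> F)
     \<and> (\<forall>A. A \<in> F \<or> - A \<in> F)"

definition Ult :: "nat set set \<Rightarrow> nat set set set" where
  "Ult \<I> = {F. ultrafilter_on_nat F \<and> {A. - A \<in> \<I>} \<subseteq> F}"

text \<open>Topology on Ult(I) induced from beta N: generated by the basic clopen sets.\<close>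
definition ult_top :: "nat set set \<Rightarrow> nat set set topology" where
  "ult_top \<I> = topology_generated_by {{F \<in> Ult \<I>. A \<in> F} | A. True}"

definition ult_borel :: "nat set set \<Rightarrow> nat set set set set" where
  "ult_borel \<I> = sigma_sets (Ult \<I>) {U. openin (ult_top \<I>) U}"

definition normalized_capacity :: "'a set \<Rightarrow> 'a set set \<Rightarrow> ('a set \<Rightarrow> real) \<Rightarrow> bool" where
  "normalized_capacity \<Omega> \<Sigma> \<rho> \<longleftrightarrow> \<rho> {} = 0 \<and> \<rho> \<Omega> = 1 \<and>
     (\<forall>A\<in>\<Sigma>. \<forall>B\<in>\<Sigma>. A \<subseteq> B \<longrightarrow> \<rho> A \<le> \<rho> B)"

definition choquet_integral :: "'a set \<Rightarrow> ('a set \<Rightarrow> real) \<Rightarrow> ('a \<Rightarrow> real) \<Rightarrow> real" where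
  "choquet_integral \<Omega> \<rho> f =
     (LBINT t:{0..}. \<rho> {x \<in> \<Omega>. f x \<ge> t}) + (LBINT t:{..0}. \<rho> {x \<in> \<Omega>. f x \<ge> t} - 1)"

definition dirac_ult :: "nat set set \<Rightarrow> nat set \<Rightarrow> real" where
  "dirac_ult F A = (if A \<in> F then 1 else 0)"

end

theory Submission
  imports Defs
begin

(*
  Let \<rho>(S) be the supremum of \<parallel>A\<parallel> over the basic clopen sets {F. A \<in> F} of Ult(I)
  contained in S. This \<rho> is monotone, vanishes on the empty set and gives Ult(I) the
  value \<parallel>N\<parallel> = 1. It agrees with \<parallel>\<cdot>\<parallel> on basic clopen sets: if every F \<in> Ult(I) containing A
  contains B, then A - B \<in> I (an ultrafilter extending the dual filter and A - B would
  separate them), so \<parallel>A\<parallel> \<le> \<parallel>A - B\<parallel> + \<parallel>B\<parallel> = \<parallel>B\<parallel>. Since F \<mapsto> \<mu>_F(A) is the indicator of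
  such a set, its Choquet integral is \<rho>({F. A \<in> F}) = \<parallel>A\<parallel>.
  Only the ideal property of Exh(\<phi>) is used.
*)

lemma submeasure_mono: "submeasure \<phi> \<Longrightarrow> A \<subseteq> B \<Longrightarrow> \<phi> A \<le> \<phi> B"
  unfolding submeasure_def by blast

lemma submeasure_Un_le: "submeasure \<phi> \<Longrightarrow> \<phi> (A \<union> B) \<le> \<phi> A + \<phi> B"
  unfolding submeasure_def by blast

lemma exh_norm_LIMSEQ:
  assumes "submeasure \<phi>"
  shows "(\<lambda>n. \<phi> (A - {..<n})) \<longlonglongrightarrow> exh_norm \<phi> A"
proof -
  have "antimono (\<lambda>n. \<phi> (A - {..<n}))"
    by (intro antimonoI submeasure_mono[OF assms]) auto
  then have "(\<lambda>n. \<phi> (A - {..<n})) \<longlonglongrightarrow> (INF n. \<phi> (A - {..<n}))"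
    by (rule LIMSEQ_INF)
  moreover from this have "exh_norm \<phi> A = (INF n. \<phi> (A - {..<n}))"
    unfolding exh_norm_def by (rule limI)
  ultimately show ?thesis by simp
qed

lemma exh_norm_mono:
  assumes "submeasure \<phi>" and "A \<subseteq> B"
  shows "exh_norm \<phi> A \<le> exh_norm \<phi> B"
  by (rule LIMSEQ_le[OF exh_norm_LIMSEQ exh_norm_LIMSEQ])
    (use assms in \<open>auto intro: submeasure_mono\<close>)

lemma exh_norm_Un_le:
  assumes "submeasure \<phi>"
  shows "exh_norm \<phi> (A \<union> B) \<le> exh_norm \<phi> A + exh_norm \<phi> B"
proof (rule LIMSEQ_le)
  show "(\<lambda>n. \<phi> (A \<union> B - {..<n})) \<longlonglongrightarrow> exh_norm \<phi> (A \<union> B)"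
    and "(\<lambda>n. \<phi> (A - {..<n}) + \<phi> (B - {..<n})) \<longlonglongrightarrow> exh_norm \<phi> A + exh_norm \<phi> B"
    using assms by (auto intro!: tendsto_add exh_norm_LIMSEQ)
  have "A \<union> B - {..<n} = (A - {..<n}) \<union> (B - {..<n})" for n by blast
  then show "\<exists>N. \<forall>n\<ge>N. \<phi> (A \<union> B - {..<n}) \<le> \<phi> (A - {..<n}) + \<phi> (B - {..<n})"
    using submeasure_Un_le[OF assms] by simp
qed

lemma exh_norm_le_if_diff_in_Exh:
  assumes "submeasure \<phi>" and "A - B \<in> Exh \<phi>"
  shows "exh_norm \<phi> A \<le> exh_norm \<phi> B"
proof -
  have "exh_norm \<phi> A \<le> exh_norm \<phi> ((A - B) \<union> B)"
    using assms(1) by (rule exh_norm_mono) blast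
  also have "\<dots> \<le> exh_norm \<phi> (A - B) + exh_norm \<phi> B"
    using assms(1) by (rule exh_norm_Un_le)
  finally show ?thesis using assms(2) unfolding Exh_def by simp
qed

definition proper_filter :: "'a set set \<Rightarrow> bool" where
  "proper_filter G \<longleftrightarrow> UNIV \<in> G \<and> {} \<notin> G \<and> (\<forall>A B. A \<in> G \<longrightarrow> A \<subseteq> B \<longrightarrow> B \<in> G)
     \<and> (\<forall>A B. A \<in> G \<longrightarrow> B \<in> G \<longrightarrow> A \<inter> B \<in> G)"

lemma ultrafilter_on_nat_iff:
  "ultrafilter_on_nat F \<longleftrightarrow> proper_filter F \<and> (\<forall>A. A \<in> F \<or> - A \<in> F)"
  unfolding ultrafilter_on_nat_def proper_filter_def by blast

lemma proper_filter_Union_chain: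
  assumes "C \<noteq> {}" and "\<forall>G\<in>C. proper_filter G" and "chain\<^sub>\<subseteq> C"
  shows "proper_filter (\<Union>C)"
  unfolding proper_filter_def
proof (intro conjI allI impI)
  note filters = assms(2)[rule_format]
  show "UNIV \<in> \<Union>C" and "{} \<notin> \<Union>C" and "\<And>A B. A \<in> \<Union>C \<Longrightarrow> A \<subseteq> B \<Longrightarrow> B \<in> \<Union>C"
    using assms(1) filters unfolding proper_filter_def by blast+
  fix A B assume "A \<in> \<Union>C" "B \<in> \<Union>C"
  then obtain G H where "G \<in> C" "A \<in> G" "H \<in> C" "B \<in> H" by blast
  moreover from this have "G \<subseteq> H \<or> H \<subseteq> G"
    using assms(3) unfolding chain_subset_def by blast
  ultimately show "A \<inter> B \<in> \<Union>C"
    using filters unfolding proper_filter_def by blast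
qed

lemma proper_filter_adjoin:
  assumes "proper_filter G" and "- X \<notin> G"
  shows "proper_filter {Y. \<exists>Z\<in>G. Z \<inter> X \<subseteq> Y}"
  unfolding proper_filter_def
proof (intro conjI allI impI)
  show "UNIV \<in> {Y. \<exists>Z\<in>G. Z \<inter> X \<subseteq> Y}" using assms(1) unfolding proper_filter_def by blast
  show "{} \<notin> {Y. \<exists>Z\<in>G. Z \<inter> X \<subseteq> Y}"
  proof
    assume "{} \<in> {Y. \<exists>Z\<in>G. Z \<inter> X \<subseteq> Y}"
    then obtain Z where "Z \<in> G" "Z \<subseteq> - X" by blast
    then show False using assms unfolding proper_filter_def by blast
  qed
next
  fix A B assume "A \<in> {Y. \<exists>Z\<in>G. Z \<inter> X \<subseteq> Y}" "B \<in> {Y. \<exists>Z\<in>G. Z \<inter> X \<subseteq> Y}"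
  then obtain Z1 Z2 where "Z1 \<in> G" "Z1 \<inter> X \<subseteq> A" "Z2 \<in> G" "Z2 \<inter> X \<subseteq> B" by blast
  moreover have "Z1 \<inter> Z2 \<in> G" using calculation assms(1) unfolding proper_filter_def by blast
  ultimately show "A \<inter> B \<in> {Y. \<exists>Z\<in>G. Z \<inter> X \<subseteq> Y}" by blast
qed auto

lemma proper_filter_extends_to_ultrafilter:
  assumes "proper_filter G"
  obtains F where "proper_filter F" "\<forall>A. A \<in> F \<or> - A \<in> F" "G \<subseteq> F"
proof -
  let ?P = "{H. proper_filter H \<and> G \<subseteq> H}"
  have "\<exists>U\<in>?P. \<forall>H\<in>C. H \<subseteq> U" if "C \<in> chains ?P" for C
  proof (cases "C = {}")
    case False
    from that have "C \<subseteq> ?P" and "chain\<^sub>\<subseteq> C" by (auto simp: chains_def)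
    with False have "proper_filter (\<Union>C)" and "G \<subseteq> \<Union>C"
      using proper_filter_Union_chain[of C] by blast+
    then show ?thesis by blast
  next
    case True
    then show ?thesis using assms by blast
  qed
  then obtain M where M: "M \<in> ?P" and maximal: "\<forall>H\<in>?P. M \<subseteq> H \<longrightarrow> H = M"
    using Zorn_Lemma2[of ?P] by blast
  have "A \<in> M \<or> - A \<in> M" for A
  proof (rule ccontr)
    assume A: "\<not> (A \<in> M \<or> - A \<in> M)"
    let ?M' = "{Y. \<exists>Z\<in>M. Z \<inter> A \<subseteq> Y}"
    have "M \<subseteq> ?M'" by blast
    moreover have "proper_filter ?M'"
      using M A by (intro proper_filter_adjoin) auto
    ultimately have "?M' = M" using M by (intro maximal[rule_format]) auto
    moreover have "A \<in> ?M'" using M unfolding proper_filter_def by blast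
    ultimately show False using A by blast
  qed
  with M that show ?thesis by blast
qed

lemma Ult_mem_if_notin_ideal:
  assumes "is_ideal \<I>" and "C \<notin> \<I>"
  obtains F where "F \<in> Ult \<I>" "C \<in> F"
proof -
  let ?G = "{X. C - X \<in> \<I>}"
  have down: "\<And>X Y. X \<in> \<I> \<Longrightarrow> Y \<subseteq> X \<Longrightarrow> Y \<in> \<I>"
    and union: "\<And>X Y. X \<in> \<I> \<Longrightarrow> Y \<in> \<I> \<Longrightarrow> X \<union> Y \<in> \<I>"
    and finite: "\<And>X. finite X \<Longrightarrow> X \<in> \<I>"
    using assms(1) unfolding is_ideal_def by blast+
  have "proper_filter ?G"
    unfolding proper_filter_def
  proof (intro conjI allI impI)
    fix X Y assume "X \<in> ?G" "Y \<in> ?G"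
    then have "(C - X) \<union> (C - Y) \<in> \<I>" by (simp add: union)
    moreover have "C - X \<inter> Y = (C - X) \<union> (C - Y)" by blast
    ultimately show "X \<inter> Y \<in> ?G" by simp
  qed (auto intro: down finite simp: assms(2))
  then obtain F where F: "proper_filter F" "\<forall>A. A \<in> F \<or> - A \<in> F" "?G \<subseteq> F"
    by (rule proper_filter_extends_to_ultrafilter)
  have "{X. - X \<in> \<I>} \<subseteq> ?G" using down by blast
  with F have "F \<in> Ult \<I>" unfolding Ult_def ultrafilter_on_nat_iff by blast
  moreover have "C \<in> F" using F(3) finite by auto
  ultimately show ?thesis by (rule that)
qed

definition ult_basic :: "nat set set \<Rightarrow> nat set \<Rightarrow> nat set set set" where
  "ult_basic \<I> A = {F \<in> Ult \<I>. A \<in> F}"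

lemma dirac_ult_eq_indicator: "(\<lambda>F. dirac_ult F A) = indicator {F. A \<in> F}"
  by (auto simp: dirac_ult_def indicator_def)

lemma Ult_Int_eq_ult_basic: "Ult \<I> \<inter> {F. A \<in> F} = ult_basic \<I> A"
  unfolding ult_basic_def by blast

lemma ult_basic_UNIV: "ult_basic \<I> UNIV = Ult \<I>"
  unfolding ult_basic_def Ult_def ultrafilter_on_nat_def by auto

lemma diff_in_ideal_if_ult_basic_subset:
  assumes "is_ideal \<I>" and "ult_basic \<I> A \<subseteq> ult_basic \<I> B"
  shows "A - B \<in> \<I>"
proof (rule ccontr)
  assume "A - B \<notin> \<I>"
  with assms(1) obtain F where F: "F \<in> Ult \<I>" "A - B \<in> F"
    by (rule Ult_mem_if_notin_ideal)
  then have filter: "ultrafilter_on_nat F" unfolding Ult_def by blast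
  with F have "A \<in> F" unfolding ultrafilter_on_nat_def by blast
  with F assms(2) have "B \<in> F" unfolding ult_basic_def by blast
  with F filter have "(A - B) \<inter> B \<in> F" unfolding ultrafilter_on_nat_def by blast
  moreover have "(A - B) \<inter> B = {}" by blast
  ultimately show False using filter unfolding ultrafilter_on_nat_def by simp
qed

lemma exh_norm_mono_ult_basic:
  assumes "submeasure \<phi>" and "is_ideal (Exh \<phi>)"
    and "ult_basic (Exh \<phi>) A \<subseteq> ult_basic (Exh \<phi>) B"
  shows "exh_norm \<phi> A \<le> exh_norm \<phi> B"
  using assms by (intro exh_norm_le_if_diff_in_Exh diff_in_ideal_if_ult_basic_subset)

definition inner_capacity :: "(nat set \<Rightarrow> ennreal) \<Rightarrow> nat set set set \<Rightarrow> ennreal" where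
  "inner_capacity \<phi> S = (SUP A \<in> {A. ult_basic (Exh \<phi>) A \<subseteq> S}. exh_norm \<phi> A)"

lemma inner_capacity_mono: "S \<subseteq> T \<Longrightarrow> inner_capacity \<phi> S \<le> inner_capacity \<phi> T"
  unfolding inner_capacity_def by (rule SUP_subset_mono) auto

lemma inner_capacity_le_exh_norm_UNIV:
  "submeasure \<phi> \<Longrightarrow> inner_capacity \<phi> S \<le> exh_norm \<phi> UNIV"
  unfolding inner_capacity_def by (intro SUP_least exh_norm_mono) auto

lemma inner_capacity_ult_basic:
  assumes "submeasure \<phi>" and "is_ideal (Exh \<phi>)"
  shows "inner_capacity \<phi> (ult_basic (Exh \<phi>) A) = exh_norm \<phi> A"
  unfolding inner_capacity_def
  by (intro antisym SUP_least SUP_upper exh_norm_mono_ult_basic[OF assms]) auto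

lemma inner_capacity_empty:
  assumes "is_ideal (Exh \<phi>)"
  shows "inner_capacity \<phi> {} = 0"
proof -
  have "ult_basic (Exh \<phi>) {} = {}"
    unfolding ult_basic_def Ult_def ultrafilter_on_nat_def by auto
  then have "A \<in> Exh \<phi>" if "ult_basic (Exh \<phi>) A \<subseteq> {}" for A
    using diff_in_ideal_if_ult_basic_subset[OF assms, of A "{}"] that by simp
  then show ?thesis unfolding inner_capacity_def Exh_def by (simp add: SUP_constant bot_ennreal)
qed

lemma choquet_integral_indicator:
  fixes \<rho> :: "'a set \<Rightarrow> real"
  assumes "\<rho> {} = 0" and "\<rho> \<Omega> = 1"
  shows "choquet_integral \<Omega> \<rho> (indicator U) = \<rho> (\<Omega> \<inter> U)"
proof -
  let ?r = "\<rho> (\<Omega> \<inter> U)"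
  have level_pos: "indicator {0..} t * \<rho> {x \<in> \<Omega>. indicator U x \<ge> t}
      = ?r * indicator {0..1} t + (1 - ?r) * indicator {0} t" for t :: real
  proof -
    consider "t < 0" | "t = 0" | "0 < t" "t \<le> 1" | "1 < t" by fastforce
    then show ?thesis
    proof cases
      case 2
      then have "{x \<in> \<Omega>. indicator U x \<ge> t} = \<Omega>" by (auto simp: indicator_def)
      then show ?thesis using 2 assms by simp
    next
      case 3
      then have "{x \<in> \<Omega>. indicator U x \<ge> t} = \<Omega> \<inter> U" by (auto simp: indicator_def)
      then show ?thesis using 3 by simp
    next
      case 4
      then have "{x \<in> \<Omega>. indicator U x \<ge> t} = {}" by (auto simp: indicator_def)
      then show ?thesis using 4 assms by (simp del: Collect_empty_eq)
    qed simp
  qed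
  have level_neg: "indicator {..0} t * (\<rho> {x \<in> \<Omega>. indicator U x \<ge> t} - 1) = 0" for t :: real
  proof (cases "t \<le> 0")
    case True
    then have "{x \<in> \<Omega>. indicator U x \<ge> t} = \<Omega>" by (auto simp: indicator_def)
    then show ?thesis using assms by simp
  qed simp
  have "choquet_integral \<Omega> \<rho> (indicator U)
      = (LINT t|lborel. ?r * indicator {0..1} t + (1 - ?r) * indicator {0::real} t)"
    unfolding choquet_integral_def set_lebesgue_integral_def by (simp add: level_pos level_neg)
  also have "\<dots> = ?r * measure lborel {0..1::real} + (1 - ?r) * measure lborel {0::real}"
    by (subst Bochner_Integration.integral_add) (auto simp: integrable_real_indicator)
  also have "\<dots> = ?r" by simp
  finally show ?thesis .
qed

theorem corollary1p3:
  fixes \<phi> :: "nat set \<Rightarrow> ennreal"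
  assumes "lsc_submeasure \<phi>"
    and "exh_norm \<phi> UNIV = 1"
    and "is_P_ideal (Exh \<phi>)"
    and "analytic_family (Exh \<phi>)"
  shows "\<exists>\<rho> :: nat set set set \<Rightarrow> real.
           normalized_capacity (Ult (Exh \<phi>)) (ult_borel (Exh \<phi>)) \<rho> \<and>
           (\<forall>A. exh_norm \<phi> A =
              ennreal (choquet_integral (Ult (Exh \<phi>)) \<rho> (\<lambda>F. dirac_ult F A)))"
proof -
  have sub: "submeasure \<phi>" using assms(1) unfolding lsc_submeasure_def by blast
  have ideal: "is_ideal (Exh \<phi>)" using assms(3) unfolding is_P_ideal_def by blast
  define \<rho> where "\<rho> S = enn2real (inner_capacity \<phi> S)" for S
  have finite: "inner_capacity \<phi> S \<noteq> top" for S
    using inner_capacity_le_exh_norm_UNIV[OF sub, of S] assms(2) by (auto simp: top_unique)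
  have \<rho>_ult_basic: "ennreal (\<rho> (ult_basic (Exh \<phi>) A)) = exh_norm \<phi> A" for A
    using finite[of "ult_basic (Exh \<phi>) A"] inner_capacity_ult_basic[OF sub ideal]
    by (simp add: \<rho>_def ennreal_enn2real_if)
  have \<rho>_empty: "\<rho> {} = 0" and \<rho>_Ult: "\<rho> (Ult (Exh \<phi>)) = 1"
    using inner_capacity_empty[OF ideal] \<rho>_ult_basic[of UNIV] assms(2)
    by (simp_all add: \<rho>_def ult_basic_UNIV)
  have "normalized_capacity (Ult (Exh \<phi>)) (ult_borel (Exh \<phi>)) \<rho>"
    unfolding normalized_capacity_def using \<rho>_empty \<rho>_Ult finite
    by (auto simp: \<rho>_def less_top[symmetric] intro!: enn2real_mono inner_capacity_mono)
  moreover have "choquet_integral (Ult (Exh \<phi>)) \<rho> (\<lambda>F. dirac_ult F A) = \<rho> (ult_basic (Exh \<phi>) A)" for A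
    using choquet_integral_indicator[OF \<rho>_empty \<rho>_Ult]
    by (simp add: dirac_ult_eq_indicator Ult_Int_eq_ult_basic)
  ultimately show ?thesis using \<rho>_ult_basic by auto
qed

end
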